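(* Let $\mathbf{F}\in\mathbb{K}[x]^{n\times n}$ be nonsingular and column reduced with column degrees $\vec d=[d_1,\dots,d_n]$, $d_{\max}=\max_i d_i$, let $\mathbf{H}$ be its Hermite normal form, $s_i=\deg h_{ii}$, $\vec s=[s_1,\dots,s_n]$. For each $i$ let $q_i,r_i$ be the quotient and remainder of $s_i$ divided by $d_{\max}$, let $\tilde{\mathbf{E}}_i=[e_i,\,x^{s_i-q_id_{\max}}e_i,\,x^{s_i-(q_i-1)d_{\max}}e_i,\dots,x^{s_i-d_{\max}}e_i]$ ($q_i+1$ columns, $e_i$ the $i$-th column of the $n\times n$ identity), $\mathbf{E}=[\tilde{\mathbf{E}}_1,\dots,\tilde{\mathbf{E}}_n]\in\mathbb{K}[x]^{n\times\bar n}$ with $\bar n=n+\sum_i q_i$, and $\vec{s^*}=[\vec{s^*}_1,\dots,\vec{s^*}_n]\in\mathbb{Z}^{\bar n}$ with $\vec{s^*}_i=[r_i,d_{\max},\dots,d_{\max}]$ ($q_i+1$ components). Suppose $\mathbf{E}=\mathbf{F}\mathbf{Q}+\mathbf{R}$ with $\mathbf{Q},\mathbf{R}$ polynomial matrices and $\deg\mathbf{R}<d_{\max}$. Let $\vec{u^*}=[2d_{\max},\dots,2d_{\max}]\in\mathbb{Z}^n$ and let $\mathbf{N}=\begin{bmatrix}\mathbf{N}_u\\ \mathbf{N}_d\end{bmatrix}$ be a $[-\vec{u^*},-\vec{s^*}]$-minimal right kernel basis of $[\mathbf{F},-\mathbf{R}]$, where $\mathbf{N}_d$ consists of the last $\bar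 n$ rows. Let $\bar{\mathbf{N}}$ be the matrix of the columns of $\mathbf{N}_d$ whose $-\vec{s^*}$-column degrees are at most $0$. Then $\mathbf{H}$ is a column basis of $\mathbf{E}\bar{\mathbf{N}}$, and the nonzero columns of $\mathbf{E}\bar{\mathbf{N}}$ have $-\vec s$-column degree $0$.
   Context: $\mathbb{K}$ is a field. Hermite normal form of nonsingular $\mathbf{F}$: the unique $\mathbf{H}=\mathbf{F}\mathbf{U}$, $\mathbf{U}$ unimodular, lower triangular with monic diagonal entries $h_{ii}$ and $\deg h_{ij}<\deg h_{ii}$ for $j<i$. For a column vector $\mathbf{p}=[p_1,\dots,p_m]^T$ and shift $\vec t\in\mathbb{Z}^m$, $\mathrm{cdeg}_{\vec t}\,\mathbf{p}=\max_i(\deg p_i+t_i)$; for a matrix, the list of these for its columns. With $\vec c$ the column degrees of $\mathbf{P}$, $\mathbf{P}$ is column reduced if the matrix of coefficients of $x^{c_j}$ in $p_{ij}$ has full column rank, and $\vec t$-column reduced if $\mathrm{diag}(x^{t_1},\dots,x^{t_m})\mathbf{P}$ is column reduced. A right kernel basis of $\mathbf{A}$ is a full-rank $\mathbf{N}$ with $\mathbf{A}\mathbf{N}=0$ whose columns generate $\{\mathbf{q}:\mathbf{A}\mathbf{q}=0\}$ over $\mathbb{K}[x]$; it is $\vec t$-minimal if also $\vec t$-column reduced. A column basis of $\mathbf{A}$ is a full-rank matrix whose columns form a basis of the $\mathbb{K}[x]$-module generated by the columns of $\mathbf{A}$. $\deg\mathbf{R}$ is the maximum degree of the entries of $\mathbf{R}$.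 *)

theory Defs
  imports "Jordan_Normal_Form.Matrix" "Jordan_Normal_Form.Determinant"
          "HOL-Computational_Algebra.Polynomial"
begin

(* The degree of the zero
   polynomial is taken to be -infinity: zero entries are ignored in column degrees. *)

definition cdeg :: "(nat \<Rightarrow> int) \<Rightarrow> 'a::zero poly vec \<Rightarrow> int" where
  "cdeg t v = Max {int (degree (v $ i)) + t i | i. i < dim_vec v \<and> v $ i \<noteq> 0}"

definition cdeg_le :: "(nat \<Rightarrow> int) \<Rightarrow> 'a::zero poly vec \<Rightarrow> int \<Rightarrow> bool" where
  "cdeg_le t v k \<longleftrightarrow> (\<forall>i < dim_vec v. v $ i \<noteq> 0 \<longrightarrow> int (degree (v $ i)) + t i \<le> k)"

definition full_col_rank :: "'b::comm_ring_1 mat \<Rightarrow> bool" where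
  "full_col_rank A \<longleftrightarrow> (\<forall>v \<in> carrier_vec (dim_col A). A *\<^sub>v v = 0\<^sub>v (dim_row A) \<longrightarrow> v = 0\<^sub>v (dim_col A))"

text \<open>Leading coefficient matrix of diag(x^t) P w.r.t. its column degrees:
  entry (i,j) is the coefficient of x^(c_j - t_i) in p_ij, c_j = cdeg_t (col j).\<close>
definition lead_mat :: "(nat \<Rightarrow> int) \<Rightarrow> 'a::zero poly mat \<Rightarrow> 'a mat" where
  "lead_mat t P = mat (dim_row P) (dim_col P)
     (\<lambda>(i,j). let e = cdeg t (col P j) - t i in if 0 \<le> e then coeff (P $$ (i,j)) (nat e) else 0)"

definition shifted_col_reduced :: "(nat \<Rightarrow> int) \<Rightarrow> 'a::field poly mat \<Rightarrow> bool" where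
  "shifted_col_reduced t P \<longleftrightarrow> full_col_rank (lead_mat t P)"

definition col_reduced :: "'a::field poly mat \<Rightarrow> bool" where
  "col_reduced P \<longleftrightarrow> shifted_col_reduced (\<lambda>_. 0) P"

definition nonsingular :: "'a::field poly mat \<Rightarrow> bool" where
  "nonsingular F \<longleftrightarrow> F \<in> carrier_mat (dim_row F) (dim_row F) \<and> det F \<noteq> 0"

definition unimodular :: "'a::field poly mat \<Rightarrow> bool" where
  "unimodular U \<longleftrightarrow> U \<in> carrier_mat (dim_row U) (dim_row U) \<and> is_unit (det U)"

definition is_hermite_nf :: "'a::field poly mat \<Rightarrow> 'a poly mat \<Rightarrow> bool" where
  "is_hermite_nf F H \<longleftrightarrow> (\<exists>U. unimodular U \<and> dim_row U = dim_col F \<and> H = F * U) \<and>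
     (\<forall>i < dim_row H. \<forall>j < dim_col H. i < j \<longrightarrow> H $$ (i,j) = 0) \<and>
     (\<forall>i < dim_row H. lead_coeff (H $$ (i,i)) = 1) \<and>
     (\<forall>i < dim_row H. \<forall>j < i. H $$ (i,j) \<noteq> 0 \<longrightarrow> degree (H $$ (i,j)) < degree (H $$ (i,i)))"

definition right_kernel_basis :: "'a::field poly mat \<Rightarrow> 'a poly mat \<Rightarrow> bool" where
  "right_kernel_basis A N \<longleftrightarrow> dim_row N = dim_col A \<and> full_col_rank N \<and>
     A * N = 0\<^sub>m (dim_row A) (dim_col N) \<and>
     (\<forall>q \<in> carrier_vec (dim_col A). A *\<^sub>v q = 0\<^sub>v (dim_row A) \<longrightarrow>
        (\<exists>c \<in> carrier_vec (dim_col N). q = N *\<^sub>v c))"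

definition minimal_kernel_basis :: "(nat \<Rightarrow> int) \<Rightarrow> 'a::field poly mat \<Rightarrow> 'a poly mat \<Rightarrow> bool" where
  "minimal_kernel_basis t A N \<longleftrightarrow> right_kernel_basis A N \<and> shifted_col_reduced t N"

definition column_basis :: "'a::field poly mat \<Rightarrow> 'a poly mat \<Rightarrow> bool" where
  "column_basis A B \<longleftrightarrow> dim_row B = dim_row A \<and> full_col_rank B \<and>
     (\<forall>c \<in> carrier_vec (dim_col A). \<exists>c' \<in> carrier_vec (dim_col B). A *\<^sub>v c = B *\<^sub>v c') \<and>
     (\<forall>c' \<in> carrier_vec (dim_col B). \<exists>c \<in> carrier_vec (dim_col A). B *\<^sub>v c' = A *\<^sub>v c)"

definition col_degs :: "'a::zero poly mat \<Rightarrow> nat \<Rightarrow> int" where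
  "col_degs F j = cdeg (\<lambda>_. 0) (col F j)"

definition dmax :: "'a::zero poly mat \<Rightarrow> nat" where
  "dmax F = nat (Max {col_degs F j | j. j < dim_col F})"

text \<open>Description of the columns of E: list of (row index i, polynomial entry, shift s*).
  Block i is [e_i, x^(s_i - q_i d) e_i, x^(s_i-(q_i-1)d) e_i, ..., x^(s_i - d) e_i]
  with shifts [r_i, d, ..., d], where s_i = deg h_ii, q_i = s_i div d, r_i = s_i mod d.\<close>
definition E_cols :: "nat \<Rightarrow> (nat \<Rightarrow> nat) \<Rightarrow> nat \<Rightarrow> (nat \<times> 'a::comm_ring_1 poly \<times> int) list" where
  "E_cols n s d = concat (map (\<lambda>i. (i, 1, int (s i mod d)) #
       map (\<lambda>k. (i, monom 1 (s i - (s i div d - k) * d), int d)) [0..<s i div d]) [0..<n])"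

definition E_mat :: "nat \<Rightarrow> (nat \<Rightarrow> nat) \<Rightarrow> nat \<Rightarrow> 'a::comm_ring_1 poly mat" where
  "E_mat n s d = (let cs = E_cols n s d in
     mat n (length cs) (\<lambda>(a,j). if a = fst (cs ! j) then fst (snd (cs ! j)) else 0))"

definition s_star :: "nat \<Rightarrow> (nat \<Rightarrow> nat) \<Rightarrow> nat \<Rightarrow> nat \<Rightarrow> int" where
  "s_star n s d j = concat (map (\<lambda>i. int (s i mod d) # replicate (s i div d) (int d)) [0..<n]) ! j"

definition hcat :: "'b::zero mat \<Rightarrow> 'b mat \<Rightarrow> 'b mat" where
  "hcat A B = mat (dim_row A) (dim_col A + dim_col B)
     (\<lambda>(i,j). if j < dim_col A then A $$ (i,j) else B $$ (i, j - dim_col A))"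

definition bottom_rows :: "nat \<Rightarrow> 'b mat \<Rightarrow> 'b mat" where
  "bottom_rows k N = mat (dim_row N - k) (dim_col N) (\<lambda>(i,j). N $$ (i + k, j))"

definition select_cols :: "('b vec \<Rightarrow> bool) \<Rightarrow> 'b mat \<Rightarrow> 'b mat" where
  "select_cols P N = (let J = filter (\<lambda>j. P (col N j)) [0..<dim_col N] in
     mat (dim_row N) (length J) (\<lambda>(i,k). N $$ (i, J ! k)))"

end

theory Submission
  imports Defs
begin

text \<open>
  The column blocks of \<open>E\<close>, together with the shifts \<open>s*\<close>, are designed so that \<open>E\<close> maps the
  vectors \<open>v\<close> with \<open>deg v\<^sub>k \<le> s*\<^sub>k\<close> onto exactly the vectors \<open>y\<close> with \<open>deg y\<^sub>i \<le> s\<^sub>i\<close>;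
  the columns of \<open>H\<close> are such vectors.  Since \<open>E = FQ + R\<close>, such an \<open>E v\<close> lies in the column
  module of \<open>F\<close>, which is that of \<open>H\<close>, iff \<open>F u = R v\<close> for some \<open>u\<close>, i.e. iff \<open>(u, v)\<close> lies in
  the kernel of \<open>[F, -R]\<close>.  As \<open>F\<close> is column reduced and \<open>deg R < d\<close>, such \<open>u\<close> has degree
  below \<open>2d\<close>, so \<open>(u, v)\<close> has shifted degree at most \<open>0\<close>, and by the predictable degree
  property of the minimal kernel basis \<open>N\<close> it combines only columns of \<open>N\<close> of shifted degree
  at most \<open>0\<close>: \<open>v\<close> is a combination of the columns of \<open>N\<^sub>d\<close> selected for \<open>N\<close>-bar.  Hence the
  columns of \<open>E N\<close>-bar generate the degree bounded part of the column module of \<open>H\<close>, which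
  contains the columns of \<open>H\<close>.  Finally, \<open>H\<close> being lower triangular, every nonzero \<open>H c\<close> has
  an entry \<open>i\<close> of degree at least \<open>s\<^sub>i\<close>, so degree bounded nonzero columns have \<open>-s\<close>-degree \<open>0\<close>.
\<close>

section \<open>Coefficients at integer exponents and shifted column degrees\<close>

definition icoeff :: "'a::zero poly \<Rightarrow> int \<Rightarrow> 'a" where
  "icoeff p e = (if 0 \<le> e then coeff p (nat e) else 0)"

lemma icoeff_0 [simp]: "icoeff 0 e = 0"
  by (simp add: icoeff_def)

lemma icoeff_sum: "icoeff (\<Sum>x\<in>A. p x) e = (\<Sum>x\<in>A. icoeff (p x) e)"
  by (simp add: icoeff_def coeff_sum)

lemma icoeff_nonzero_imp_degree:
  assumes "icoeff p e \<noteq> 0"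
  shows "p \<noteq> 0" and "e \<le> int (degree p)"
  using assms le_degree[of p "nat e"] by (auto simp: icoeff_def split: if_splits)

lemma icoeff_degree: "icoeff p (int (degree p)) = lead_coeff p"
  by (simp add: icoeff_def)

lemma coeff_mult_at_degree_bounds:
  fixes p q :: "'a::comm_semiring_0 poly"
  assumes "degree p \<le> a" "degree q \<le> b"
  shows "coeff (p * q) (a + b) = coeff p a * coeff q b"
proof -
  have "coeff (p * q) (a + b) = (\<Sum>x\<le>a + b. coeff p x * coeff q (a + b - x))"
    by (rule coeff_mult)
  also have "\<dots> = (\<Sum>x\<le>a + b. if x = a then coeff p a * coeff q b else 0)"
  proof (rule sum.cong [OF refl])
    fix x
    show "coeff p x * coeff q (a + b - x) = (if x = a then coeff p a * coeff q b else 0)"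
      using assms by (cases x a rule: linorder_cases) (auto simp: coeff_eq_0)
  qed
  finally show ?thesis by simp
qed

lemma icoeff_mult_at_degree_bounds:
  fixes p q :: "'a::comm_semiring_0 poly"
  assumes "p \<noteq> 0 \<Longrightarrow> int (degree p) \<le> a" and "q \<noteq> 0 \<Longrightarrow> int (degree q) \<le> b"
  shows "icoeff (p * q) (a + b) = icoeff p a * icoeff q b"
proof (cases "p = 0 \<or> q = 0")
  case False
  then have "0 \<le> a" "0 \<le> b" "degree p \<le> nat a" "degree q \<le> nat b"
    using assms by auto
  then show ?thesis
    by (simp add: icoeff_def nat_add_distrib coeff_mult_at_degree_bounds)
qed auto

lemma cdeg_ge_entry:
  assumes "i < dim_vec v" "v $ i \<noteq> 0"
  shows "int (degree (v $ i)) + t i \<le> cdeg t v"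
  unfolding cdeg_def using assms by (intro Max_ge) auto

lemma cdeg_le_cdeg: "cdeg_le t v (cdeg t v)"
  unfolding cdeg_le_def using cdeg_ge_entry by blast

lemma cdeg_eqI:
  assumes "cdeg_le t v k" "i < dim_vec v" "v $ i \<noteq> 0" "int (degree (v $ i)) + t i = k"
  shows "cdeg t v = k"
  unfolding cdeg_def using assms by (intro Max_eqI) (auto simp: cdeg_le_def)

lemma cdeg_le_mono: "cdeg_le t v k \<Longrightarrow> k \<le> k' \<Longrightarrow> cdeg_le t v k'"
  by (force simp: cdeg_le_def)

lemma cdeg_le_zero_vec [simp]: "cdeg_le t (0\<^sub>v m) k"
  by (simp add: cdeg_le_def)

lemma cdeg_le_add:
  assumes "dim_vec w = dim_vec v" "cdeg_le t v k" "cdeg_le t w k"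
  shows "cdeg_le t (v + w) k"
  unfolding cdeg_le_def
proof (intro allI impI)
  fix i assume i: "i < dim_vec (v + w)" and nz: "(v + w) $ i \<noteq> 0"
  have sum: "(v + w) $ i = v $ i + w $ i" using i assms(1) by simp
  show "int (degree ((v + w) $ i)) + t i \<le> k"
  proof (cases "v $ i = 0 \<or> w $ i = 0")
    case True
    then show ?thesis using assms i nz unfolding sum cdeg_le_def by auto
  next
    case False
    then have "int (degree (v $ i)) \<le> k - t i" "int (degree (w $ i)) \<le> k - t i"
      using assms i unfolding cdeg_le_def by auto
    then have "degree (v $ i + w $ i) \<le> nat (k - t i)"
      by (intro degree_add_le) auto
    then show ?thesis using \<open>int (degree (v $ i)) \<le> k - t i\<close> unfolding sum by linarith
  qed
qed

lemma index_mult_mat_vec_sum: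
  "i < dim_row A \<Longrightarrow> dim_vec v = dim_col A \<Longrightarrow> (A *\<^sub>v v) $ i = (\<Sum>j<dim_col A. A $$ (i,j) * v $ j)"
  by (simp add: scalar_prod_def atLeast0LessThan)

lemma cdeg_le_mult_mat_vec:
  fixes A :: "'a::comm_semiring_1 poly mat"
  assumes A: "A \<in> carrier_mat m n" and v: "v \<in> carrier_vec n" and vk: "cdeg_le t v k"
    and A_deg: "\<And>i j. i < m \<Longrightarrow> j < n \<Longrightarrow> A $$ (i,j) \<noteq> 0 \<Longrightarrow>
                  int (degree (A $$ (i,j))) + t' i \<le> t j + l"
  shows "cdeg_le t' (A *\<^sub>v v) (k + l)"
  unfolding cdeg_le_def
proof (intro allI impI)
  fix i assume "i < dim_vec (A *\<^sub>v v)" and nz: "(A *\<^sub>v v) $ i \<noteq> 0"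
  then have i: "i < m" using A by simp
  have entry: "(A *\<^sub>v v) $ i = (\<Sum>j<n. A $$ (i,j) * v $ j)"
    using index_mult_mat_vec_sum[of i A v] A v i by simp
  have summand: "A $$ (i,j) * v $ j = 0 \<or> int (degree (A $$ (i,j) * v $ j)) + t' i \<le> k + l"
    if j: "j < n" for j
  proof (cases "A $$ (i,j) = 0 \<or> v $ j = 0")
    case False
    then have "int (degree (A $$ (i,j))) + t' i \<le> t j + l" "int (degree (v $ j)) + t j \<le> k"
      using A_deg[OF i j] vk v j unfolding cdeg_le_def by auto
    then show ?thesis using degree_mult_le[of "A $$ (i,j)" "v $ j"] by linarith
  qed auto
  obtain j where j: "j < n" "A $$ (i,j) * v $ j \<noteq> 0"
    using nz unfolding entry by (meson lessThan_iff sum.neutral)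
  then have bound: "0 \<le> k + l - t' i" using summand by fastforce
  have "degree (\<Sum>j<n. A $$ (i,j) * v $ j) \<le> nat (k + l - t' i)"
    using summand by (intro degree_sum_le) fastforce+
  then show "int (degree ((A *\<^sub>v v) $ i)) + t' i \<le> k + l"
    unfolding entry using bound by linarith
qed

lemma dim_lead_mat [simp]:
  "dim_row (lead_mat t N) = dim_row N" "dim_col (lead_mat t N) = dim_col N"
  by (simp_all add: lead_mat_def)

lemma lead_mat_index:
  "i < dim_row N \<Longrightarrow> j < dim_col N \<Longrightarrow>
     lead_mat t N $$ (i,j) = icoeff (N $$ (i,j)) (cdeg t (col N j) - t i)"
  by (simp add: lead_mat_def icoeff_def Let_def)

lemma lead_mat_mult_vec_index:
  fixes N :: "'a::comm_semiring_1 poly mat"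
  assumes c: "c \<in> carrier_vec (dim_col N)" and i: "i < dim_row N"
    and bound: "\<And>j. j < dim_col N \<Longrightarrow> c $ j \<noteq> 0 \<Longrightarrow> int (degree (c $ j)) + cdeg t (col N j) \<le> \<delta>"
  shows "(lead_mat t N *\<^sub>v vec (dim_col N) (\<lambda>j. icoeff (c $ j) (\<delta> - cdeg t (col N j)))) $ i
           = icoeff ((N *\<^sub>v c) $ i) (\<delta> - t i)"
proof -
  let ?w = "vec (dim_col N) (\<lambda>j. icoeff (c $ j) (\<delta> - cdeg t (col N j)))"
  have summand: "lead_mat t N $$ (i,j) * ?w $ j = icoeff (N $$ (i,j) * c $ j) (\<delta> - t i)"
    if j: "j < dim_col N" for j
  proof -
    have "N $$ (i,j) \<noteq> 0 \<Longrightarrow> int (degree (N $$ (i,j))) \<le> cdeg t (col N j) - t i"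
      using cdeg_ge_entry[of i "col N j" t] i j by simp
    moreover have "c $ j \<noteq> 0 \<Longrightarrow> int (degree (c $ j)) \<le> \<delta> - cdeg t (col N j)"
      using bound[OF j] by simp
    ultimately show ?thesis
      using icoeff_mult_at_degree_bounds i j by (fastforce simp: lead_mat_index)
  qed
  have "(lead_mat t N *\<^sub>v ?w) $ i = (\<Sum>j<dim_col N. lead_mat t N $$ (i,j) * ?w $ j)"
    using index_mult_mat_vec_sum[of i "lead_mat t N" ?w] i by simp
  also have "\<dots> = icoeff (\<Sum>j<dim_col N. N $$ (i,j) * c $ j) (\<delta> - t i)"
    using summand by (simp add: icoeff_sum)
  also have "\<dots> = icoeff ((N *\<^sub>v c) $ i) (\<delta> - t i)"
    using index_mult_mat_vec_sum[of i N c] c i by simp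
  finally show ?thesis .
qed

section \<open>The predictable degree property\<close>

lemma predictable_degree:
  fixes N :: "'a::field poly mat"
  assumes red: "shifted_col_reduced t N" and c: "c \<in> carrier_vec (dim_col N)"
    and Nc: "cdeg_le t (N *\<^sub>v c) k" and j: "j < dim_col N" and cj: "c $ j \<noteq> 0"
  shows "int (degree (c $ j)) + cdeg t (col N j) \<le> k"
proof (rule ccontr)
  \<comment> \<open>Otherwise the coefficients of \<open>c\<close> at the maximal shifted degree \<open>\<delta> > k\<close> form a nonzero
      vector \<open>w\<close>; as the leading coefficient matrix has full rank, \<open>lead_mat t N w \<noteq> 0\<close>
      exhibits an entry of \<open>N c\<close> of shifted degree \<open>\<delta>\<close>.\<close>
  assume contra: "\<not> ?thesis"
  define J where "J = {j. j < dim_col N \<and> c $ j \<noteq> 0}"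
  define \<delta> where "\<delta> = Max ((\<lambda>j. int (degree (c $ j)) + cdeg t (col N j)) ` J)"
  define w where "w = vec (dim_col N) (\<lambda>j. icoeff (c $ j) (\<delta> - cdeg t (col N j)))"
  have fin: "finite J" and "j \<in> J" using j cj by (auto simp: J_def)
  then have "k < \<delta>"
    using contra unfolding \<delta>_def by (meson Max_ge finite_imageI image_eqI not_le order.strict_trans1)
  have "\<delta> \<in> (\<lambda>j. int (degree (c $ j)) + cdeg t (col N j)) ` J"
    unfolding \<delta>_def using fin \<open>j \<in> J\<close> by (intro Max_in) auto
  then obtain j0 where j0: "j0 \<in> J" "\<delta> = int (degree (c $ j0)) + cdeg t (col N j0)"
    by blast
  have "w $ j0 \<noteq> 0" using j0 by (simp add: J_def w_def icoeff_degree)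
  then have "w \<noteq> 0\<^sub>v (dim_col N)" using j0 by (auto simp: J_def)
  then have "lead_mat t N *\<^sub>v w \<noteq> 0\<^sub>v (dim_row N)"
    using red unfolding shifted_col_reduced_def full_col_rank_def by (auto simp: w_def)
  then obtain i where i: "i < dim_row N" and "(lead_mat t N *\<^sub>v w) $ i \<noteq> 0"
    by (metis dim_lead_mat(1) dim_mult_mat_vec eq_vecI index_zero_vec)
  moreover have
    "\<And>j. j < dim_col N \<Longrightarrow> c $ j \<noteq> 0 \<Longrightarrow> int (degree (c $ j)) + cdeg t (col N j) \<le> \<delta>"
    unfolding \<delta>_def J_def using fin by (intro Max_ge) (auto simp: J_def)
  ultimately have "icoeff ((N *\<^sub>v c) $ i) (\<delta> - t i) \<noteq> 0"
    using lead_mat_mult_vec_index[OF c i] unfolding w_def by simp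
  then have "(N *\<^sub>v c) $ i \<noteq> 0" "\<delta> - t i \<le> int (degree ((N *\<^sub>v c) $ i))"
    by (rule icoeff_nonzero_imp_degree)+
  then show False using Nc i \<open>k < \<delta>\<close> unfolding cdeg_le_def by fastforce
qed

lemma shifted_col_reduced_col_nonzero:
  assumes "shifted_col_reduced t N" "j < dim_col N"
  shows "\<exists>i < dim_row N. N $$ (i,j) \<noteq> 0"
proof (rule ccontr)
  assume "\<not> ?thesis"
  then have "lead_mat t N *\<^sub>v unit_vec (dim_col N) j = 0\<^sub>v (dim_row N)"
    using assms(2) by (intro eq_vecI) (auto simp: lead_mat_index scalar_prod_right_unit)
  then show False
    using assms unfolding shifted_col_reduced_def full_col_rank_def by auto
qed

lemma col_reduced_mult_vec_degree:
  fixes F :: "'a::field poly mat"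
  assumes red: "col_reduced F" and u: "u \<in> carrier_vec (dim_col F)"
    and Fu: "cdeg_le (\<lambda>_. 0) (F *\<^sub>v u) k" and j: "j < dim_col F" and uj: "u $ j \<noteq> 0"
  shows "int (degree (u $ j)) \<le> k"
proof -
  have red': "shifted_col_reduced (\<lambda>_. 0) F" using red unfolding col_reduced_def .
  obtain i where "i < dim_row F" "F $$ (i,j) \<noteq> 0"
    using shifted_col_reduced_col_nonzero[OF red' j] by blast
  then have "0 \<le> cdeg (\<lambda>_. 0) (col F j)"
    using cdeg_ge_entry[of i "col F j" "\<lambda>_. 0"] j by simp
  then show ?thesis using predictable_degree[OF red' u Fu j uj] by linarith
qed

section \<open>Block matrices and column selection\<close>

lemma mult_mat_vec_zero_right [simp]: "A *\<^sub>v 0\<^sub>v (dim_col A) = 0\<^sub>v (dim_row A)"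
  by (intro eq_vecI) (auto intro: scalar_prod_right_zero)

lemma full_col_rank_if_det_nonzero:
  fixes A :: "'a::idom mat"
  assumes "A \<in> carrier_mat n n" "det A \<noteq> 0"
  shows "full_col_rank A"
  using assms det_0_iff_vec_prod_zero[OF assms(1)] unfolding full_col_rank_def by auto

lemma mult_mat_vec_unit_vec:
  fixes A :: "'a::comm_ring_1 mat"
  shows "A \<in> carrier_mat m k \<Longrightarrow> j < k \<Longrightarrow> A *\<^sub>v unit_vec k j = col A j"
  by auto

lemma hcat_carrier: "A \<in> carrier_mat m a \<Longrightarrow> B \<in> carrier_mat m b \<Longrightarrow> hcat A B \<in> carrier_mat m (a + b)"
  by (simp add: hcat_def)

lemma hcat_mult_append_vec:
  fixes A B :: "'a::comm_ring_1 mat"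
  assumes A: "A \<in> carrier_mat m a" and B: "B \<in> carrier_mat m b"
    and u: "u \<in> carrier_vec a" and v: "v \<in> carrier_vec b"
  shows "hcat A B *\<^sub>v (u @\<^sub>v v) = A *\<^sub>v u + B *\<^sub>v v"
proof (rule eq_vecI)
  fix i assume "i < dim_vec (A *\<^sub>v u + B *\<^sub>v v)"
  then have i: "i < m" using B by simp
  have "row (hcat A B) i = row A i @\<^sub>v row B i"
    using A B i by (intro eq_vecI) (auto simp: hcat_def)
  then show "(hcat A B *\<^sub>v (u @\<^sub>v v)) $ i = (A *\<^sub>v u + B *\<^sub>v v) $ i"
    using A B u v i by (simp add: hcat_def scalar_prod_append[of _ a _ b])
qed (use A B in \<open>simp add: hcat_def\<close>)

lemma dim_bottom_rows [simp]:
  "dim_row (bottom_rows k N) = dim_row N - k" "dim_col (bottom_rows k N) = dim_col N"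
  by (simp_all add: bottom_rows_def)

lemma row_bottom_rows:
  "i < dim_row N - k \<Longrightarrow> row (bottom_rows k N) i = row N (k + i)"
  by (intro eq_vecI) (auto simp: bottom_rows_def add.commute)

lemma bottom_rows_mult_vec:
  "bottom_rows k N *\<^sub>v c = vec_last (N *\<^sub>v c) (dim_row N - k)"
  by (intro eq_vecI) (auto simp: vec_last_def row_bottom_rows)

lemma col_bottom_rows:
  "j < dim_col N \<Longrightarrow> col (bottom_rows k N) j = vec_last (col N j) (dim_row N - k)"
  by (intro eq_vecI) (auto simp: bottom_rows_def vec_last_def add.commute)

lemma cdeg_le_vec_last:
  assumes "cdeg_le t v k" "m \<le> dim_vec v"
  shows "cdeg_le (\<lambda>i. t (dim_vec v - m + i)) (vec_last v m) k"
  using assms by (auto simp: cdeg_le_def vec_last_def)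

abbreviation selected_cols :: "('b vec \<Rightarrow> bool) \<Rightarrow> 'b mat \<Rightarrow> nat list" where
  "selected_cols P M \<equiv> filter (\<lambda>j. P (col M j)) [0..<dim_col M]"

lemma dim_row_select_cols [simp]: "dim_row (select_cols P M) = dim_row M"
  by (simp add: select_cols_def Let_def)

lemma dim_col_select_cols: "dim_col (select_cols P M) = length (selected_cols P M)"
  by (simp add: select_cols_def Let_def)

lemma select_cols_index:
  "i < dim_row M \<Longrightarrow> k < dim_col (select_cols P M) \<Longrightarrow>
     select_cols P M $$ (i,k) = M $$ (i, selected_cols P M ! k)"
  by (simp add: select_cols_def Let_def)

lemma selected_cols_nth:
  assumes "k < dim_col (select_cols P M)"
  shows "selected_cols P M ! k < dim_col M" and "P (col M (selected_cols P M ! k))"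
proof -
  have "selected_cols P M ! k \<in> set (selected_cols P M)"
    using assms by (intro nth_mem) (simp add: dim_col_select_cols)
  then show "selected_cols P M ! k < dim_col M" and "P (col M (selected_cols P M ! k))"
    by simp_all
qed

lemma col_select_cols:
  assumes "k < dim_col (select_cols P M)"
  shows "col (select_cols P M) k = col M (selected_cols P M ! k)"
  using assms selected_cols_nth[OF assms]
  by (intro eq_vecI) (auto simp: select_cols_index)

lemma select_cols_factor:
  fixes M :: "'a::comm_ring_1 mat"
  obtains S where "S \<in> carrier_mat (dim_col M) (dim_col (select_cols P M))" "select_cols P M = M * S"
proof -
  let ?J = "selected_cols P M"
  define S where "S = mat (dim_col M) (length ?J) (\<lambda>(j,k). if j = ?J ! k then 1 else (0::'a))"
  have S: "S \<in> carrier_mat (dim_col M) (dim_col (select_cols P M))"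
    by (simp add: S_def dim_col_select_cols)
  have "select_cols P M = M * S"
  proof (rule eq_matI)
    fix i k assume i: "i < dim_row (M * S)" and k: "k < dim_col (M * S)"
    then have "?J ! k < dim_col M"
      using S selected_cols_nth(1)[of k P M] by (simp add: dim_col_select_cols)
    then show "select_cols P M $$ (i,k) = (M * S) $$ (i,k)"
      using i k S
      by (simp add: S_def select_cols_index dim_col_select_cols scalar_prod_def
          if_distrib[of "(*) _"] cong: if_cong)
  qed (use S in simp_all)
  then show ?thesis using S that by blast
qed

lemma select_cols_mult_vec:
  fixes M :: "'a::comm_ring_1 mat"
  assumes c: "c \<in> carrier_vec (dim_col M)"
    and supp: "\<And>j. j < dim_col M \<Longrightarrow> c $ j \<noteq> 0 \<Longrightarrow> P (col M j)"
  shows "M *\<^sub>v c =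
    select_cols P M *\<^sub>v vec (dim_col (select_cols P M)) (\<lambda>k. c $ (selected_cols P M ! k))"
proof (rule eq_vecI)
  let ?J = "selected_cols P M"
  fix i assume "i < dim_vec (select_cols P M *\<^sub>v vec (dim_col (select_cols P M)) (\<lambda>k. c $ (?J ! k)))"
  then have i: "i < dim_row M" by simp
  have "(select_cols P M *\<^sub>v vec (dim_col (select_cols P M)) (\<lambda>k. c $ (?J ! k))) $ i
          = (\<Sum>k<length ?J. M $$ (i, ?J ! k) * c $ (?J ! k))"
    using i index_mult_mat_vec_sum[of i "select_cols P M"]
    by (simp add: select_cols_index dim_col_select_cols)
  also have "\<dots> = (\<Sum>j\<in>set ?J. M $$ (i,j) * c $ j)"
    using bij_betw_nth[of ?J "{..<length ?J}" "set ?J"]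
    by (intro sum.reindex_bij_betw) simp_all
  also have "\<dots> = (\<Sum>j<dim_col M. M $$ (i,j) * c $ j)"
  proof (rule sum.mono_neutral_left)
    show "\<forall>j\<in>{..<dim_col M} - set ?J. M $$ (i,j) * c $ j = 0"
      using supp by fastforce
  qed auto
  also have "\<dots> = (M *\<^sub>v c) $ i"
    using index_mult_mat_vec_sum[of i M c] i c by simp
  finally show "(M *\<^sub>v c) $ i = (select_cols P M *\<^sub>v vec (dim_col (select_cols P M)) (\<lambda>k. c $ (?J ! k))) $ i"
    by simp
qed simp

lemma column_basisI:
  fixes B H :: "'a::field poly mat"
  assumes H: "H \<in> carrier_mat n n" "det H \<noteq> 0" and B: "B \<in> carrier_mat n m"
    and B_in_H: "\<And>c. c \<in> carrier_vec m \<Longrightarrow> \<exists>c' \<in> carrier_vec n. B *\<^sub>v c = H *\<^sub>v c'"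
    and H_in_B: "\<And>j. j < n \<Longrightarrow> \<exists>a \<in> carrier_vec m. col H j = B *\<^sub>v a"
  shows "column_basis B H"
proof -
  obtain a where a: "\<And>j. j < n \<Longrightarrow> a j \<in> carrier_vec m \<and> col H j = B *\<^sub>v a j"
    using H_in_B by metis
  define A where "A = mat m n (\<lambda>(k,j). a j $ k)"
  have A: "A \<in> carrier_mat m n" by (simp add: A_def)
  have "H = B * A"
  proof (rule eq_matI)
    fix i j assume "i < dim_row (B * A)" "j < dim_col (B * A)"
    then have i: "i < n" and j: "j < n" using A B by auto
    have "col A j = a j" using a[OF j] j by (intro eq_vecI) (auto simp: A_def)
    then have "col (B * A) j = col H j" using a[OF j] col_mult2[OF B A j] by simp
    then show "H $$ (i,j) = (B * A) $$ (i,j)"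
      using i j A B H by (metis carrier_matD index_col index_mult_mat(2,3))
  qed (use A B H in auto)
  then have "\<exists>c \<in> carrier_vec m. H *\<^sub>v c' = B *\<^sub>v c" if "c' \<in> carrier_vec n" for c'
    using that A B by (intro bexI[of _ "A *\<^sub>v c'"]) auto
  then show ?thesis
    using B_in_H H B full_col_rank_if_det_nonzero[OF H] unfolding column_basis_def by auto
qed

section \<open>Hermite normal forms\<close>

lemma lower_triangular_mult_vec_degree:
  fixes H :: "'a::idom poly mat"
  assumes H: "H \<in> carrier_mat n n" and upper: "\<And>i j. i < j \<Longrightarrow> j < n \<Longrightarrow> H $$ (i,j) = 0"
    and diag: "\<And>i. i < n \<Longrightarrow> H $$ (i,i) \<noteq> 0" and c: "c \<in> carrier_vec n" and "c \<noteq> 0\<^sub>v n"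
  shows "\<exists>i<n. (H *\<^sub>v c) $ i \<noteq> 0 \<and> degree (H $$ (i,i)) \<le> degree ((H *\<^sub>v c) $ i)"
proof -
  have ex: "\<exists>i. i < n \<and> c $ i \<noteq> 0"
  proof (rule ccontr)
    assume "\<nexists>i. i < n \<and> c $ i \<noteq> 0"
    then have "c = 0\<^sub>v n" using c by (intro eq_vecI) auto
    then show False using \<open>c \<noteq> 0\<^sub>v n\<close> by contradiction
  qed
  define i where "i = (LEAST i. i < n \<and> c $ i \<noteq> 0)"
  have i: "i < n" "c $ i \<noteq> 0" using LeastI_ex[OF ex] unfolding i_def by auto
  have before: "c $ j = 0" if "j < i" for j
    using not_less_Least[of j "\<lambda>i. i < n \<and> c $ i \<noteq> 0"] that i unfolding i_def by auto
  have summand: "H $$ (i,j) * c $ j = (if j = i then H $$ (i,i) * c $ i else 0)" if "j < n" for j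
  proof (cases j i rule: linorder_cases)
    case less
    then show ?thesis using before by simp
  next
    case greater
    then show ?thesis using upper that by simp
  qed simp
  have "(H *\<^sub>v c) $ i = (\<Sum>j<n. H $$ (i,j) * c $ j)"
    using index_mult_mat_vec_sum[of i H c] H c i by simp
  also have "\<dots> = (\<Sum>j<n. if j = i then H $$ (i,i) * c $ i else 0)"
    using summand by (intro sum.cong) auto
  also have "\<dots> = H $$ (i,i) * c $ i" using i by simp
  finally have "(H *\<^sub>v c) $ i = H $$ (i,i) * c $ i" .
  moreover have "degree (H $$ (i,i) * c $ i) = degree (H $$ (i,i)) + degree (c $ i)"
    using diag i by (intro degree_mult_eq) auto
  ultimately show ?thesis
    using diag i by (intro exI[of _ i]) simp
qed

lemma hermite_nf_diag_nonzero:
  assumes "is_hermite_nf F H" "i < dim_row H"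
  shows "H $$ (i,i) \<noteq> 0"
proof -
  have "lead_coeff (H $$ (i,i)) = 1" using assms unfolding is_hermite_nf_def by blast
  then show ?thesis by auto
qed

lemma hermite_nf_col_cdeg_le:
  assumes H: "is_hermite_nf F H" "H \<in> carrier_mat n n" and j: "j < n"
  shows "cdeg_le (\<lambda>i. - int (degree (H $$ (i,i)))) (col H j) 0"
  unfolding cdeg_le_def
proof (intro allI impI)
  fix i assume "i < dim_vec (col H j)" and nz: "col H j $ i \<noteq> 0"
  then have i: "i < n" and Hij: "H $$ (i,j) \<noteq> 0" using H j by auto
  have "degree (H $$ (i,j)) \<le> degree (H $$ (i,i))"
  proof (cases i j rule: linorder_cases)
    case less
    then show ?thesis using H j Hij unfolding is_hermite_nf_def by auto
  next
    case greater
    then have "degree (H $$ (i,j)) < degree (H $$ (i,i))"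
      using H i Hij unfolding is_hermite_nf_def by auto
    then show ?thesis by simp
  qed simp
  then show "int (degree (col H j $ i)) + - int (degree (H $$ (i,i))) \<le> 0"
    using H i j by simp
qed

lemma hermite_nf_cdeg_eq_0:
  fixes H :: "'a::field poly mat"
  assumes H: "is_hermite_nf F H" "H \<in> carrier_mat n n" and c: "c \<in> carrier_vec n"
    and nz: "H *\<^sub>v c \<noteq> 0\<^sub>v n" and le: "cdeg_le (\<lambda>i. - int (degree (H $$ (i,i)))) (H *\<^sub>v c) 0"
  shows "cdeg (\<lambda>i. - int (degree (H $$ (i,i)))) (H *\<^sub>v c) = 0"
proof -
  have "c \<noteq> 0\<^sub>v n" using nz H by auto
  moreover have "\<And>i j. i < j \<Longrightarrow> j < n \<Longrightarrow> H $$ (i,j) = 0"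
    using H unfolding is_hermite_nf_def by auto
  ultimately obtain i where "i < n" "(H *\<^sub>v c) $ i \<noteq> 0" "degree (H $$ (i,i)) \<le> degree ((H *\<^sub>v c) $ i)"
    using lower_triangular_mult_vec_degree[OF H(2) _ _ c] hermite_nf_diag_nonzero[OF H(1)] H(2)
    by fastforce
  moreover have "int (degree ((H *\<^sub>v c) $ i)) + - int (degree (H $$ (i,i))) \<le> 0"
    using le \<open>i < n\<close> \<open>(H *\<^sub>v c) $ i \<noteq> 0\<close> H(2) unfolding cdeg_le_def by auto
  ultimately show ?thesis
    using le H(2) by (intro cdeg_eqI[of _ _ _ i]) auto
qed

lemma unimodular_right_inverse:
  fixes U :: "'a::field poly mat"
  assumes U: "U \<in> carrier_mat n n" "unimodular U"
  shows "\<exists>V \<in> carrier_mat n n. U * V = 1\<^sub>m n"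
proof -
  obtain k where k: "1 = det U * k" using U(2) unfolding unimodular_def by (auto elim!: dvdE)
  have adj: "adj_mat U \<in> carrier_mat n n" "U * adj_mat U = det U \<cdot>\<^sub>m 1\<^sub>m n"
    using adj_mat[OF U(1)] by auto
  have "U * (k \<cdot>\<^sub>m adj_mat U) = k \<cdot>\<^sub>m (U * adj_mat U)"
    using U(1) adj(1) by (rule mult_smult_distrib)
  also have "\<dots> = 1\<^sub>m n" unfolding adj(2) using k by (intro eq_matI) (auto simp: mult.commute)
  finally show ?thesis using adj(1) by (intro bexI[of _ "k \<cdot>\<^sub>m adj_mat U"]) auto
qed

lemma hermite_nf_left_factor:
  fixes F H :: "'a::field poly mat"
  assumes H: "is_hermite_nf F H" and F: "F \<in> carrier_mat n n"
  obtains U where "unimodular U" "U \<in> carrier_mat n n" "H = F * U"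
proof -
  obtain U where U: "unimodular U" "dim_row U = dim_col F" "H = F * U"
    using H unfolding is_hermite_nf_def by blast
  then have "U \<in> carrier_mat n n" using F unfolding unimodular_def by simp
  then show ?thesis using that U by simp
qed

lemma hermite_nf_right_factor:
  fixes F H :: "'a::field poly mat"
  assumes H: "is_hermite_nf F H" and F: "F \<in> carrier_mat n n"
  obtains V where "V \<in> carrier_mat n n" "F = H * V"
proof -
  obtain U where U: "unimodular U" "U \<in> carrier_mat n n" "H = F * U"
    using hermite_nf_left_factor[OF H F] .
  obtain V where V: "V \<in> carrier_mat n n" "U * V = 1\<^sub>m n"
    using unimodular_right_inverse[OF U(2,1)] by blast
  have "H * V = F * (U * V)" unfolding U(3) by (rule assoc_mult_mat[OF F U(2) V(1)])
  also have "\<dots> = F" using F V(2) by simp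
  finally show ?thesis using that V(1) by simp
qed

lemma hermite_nf_det_nonzero:
  fixes F H :: "'a::field poly mat"
  assumes F: "nonsingular F" "F \<in> carrier_mat n n" and H: "is_hermite_nf F H"
  shows "det H \<noteq> 0"
proof -
  obtain U where U: "unimodular U" "U \<in> carrier_mat n n" "H = F * U"
    using hermite_nf_left_factor[OF H F(2)] .
  have "det U \<noteq> 0" using U(1) not_is_unit_0 unfolding unimodular_def by metis
  moreover have "det H = det F * det U" unfolding U(3) using F(2) U(2) by (rule det_mult)
  ultimately show ?thesis using F(1) unfolding nonsingular_def by simp
qed

section \<open>The matrix \<open>E\<close>\<close>

lemma set_E_cols:
  "set (E_cols n s d :: (nat \<times> 'a::comm_ring_1 poly \<times> int) list) =
     {(i, 1, int (s i mod d)) | i. i < n} \<union>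
     {(i, monom 1 (s i mod d + k * d), int d) | i k. i < n \<and> k < s i div d}"
proof -
  have exponent: "s i - (s i div d - k) * d = s i mod d + k * d" if "k < s i div d" for i k
  proof -
    have "k * d \<le> s i div d * d" using that by simp
    moreover have "(s i div d - k) * d = s i div d * d - k * d" by (simp add: diff_mult_distrib)
    ultimately show ?thesis using div_mult_mod_eq[of "s i" d] by linarith
  qed
  have "set (E_cols n s d :: (nat \<times> 'a poly \<times> int) list) =
          (\<Union>i<n. insert (i, 1, int (s i mod d))
                   ((\<lambda>k. (i, monom 1 (s i - (s i div d - k) * d), int d)) ` {..<s i div d}))"
    unfolding E_cols_def by (simp add: atLeast0LessThan)
  also have "\<dots> = (\<Union>i<n. insert (i, 1, int (s i mod d))
                   ((\<lambda>k. (i, monom 1 (s i mod d + k * d), int d)) ` {..<s i div d}))"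
    by (intro SUP_cong refl arg_cong[where f = "insert _"] image_cong) (simp add: exponent)
  also have "\<dots> = {(i, 1, int (s i mod d)) | i. i < n} \<union>
                   {(i, monom 1 (s i mod d + k * d), int d) | i k. i < n \<and> k < s i div d}"
    by blast
  finally show ?thesis .
qed

lemma E_cols_length: "length (E_cols n s d) = n + (\<Sum>i<n. s i div d)"
  by (induct n) (simp_all add: E_cols_def)

lemma E_cols_degree:
  assumes "(i, p, sh) \<in> set (E_cols n s d :: (nat \<times> 'a::comm_ring_1 poly \<times> int) list)"
  shows "int (degree p) + sh \<le> int (s i)"
proof -
  have "int (s i mod d) + int k * int d + int d \<le> int (s i)" if "k < s i div d" for k
  proof -
    have "(k + 1) * d \<le> s i div d * d" using that by (intro mult_right_mono) auto
    then have "k * d + d \<le> s i div d * d" by simp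
    then have "s i mod d + k * d + d \<le> s i" using div_mult_mod_eq[of "s i" d] by linarith
    then show ?thesis by (simp only: of_nat_add[symmetric] of_nat_mult[symmetric] of_nat_le_iff)
  qed
  then show ?thesis
    using assms unfolding set_E_cols by (auto simp: degree_monom_eq)
qed

lemma E_cols_monom_below:
  assumes i: "i < n" and m: "m \<le> s i"
  shows "\<exists>e sh. (i, monom 1 e, sh) \<in> set (E_cols n s d :: (nat \<times> 'a::comm_ring_1 poly \<times> int) list)
                 \<and> e \<le> m \<and> int (m - e) \<le> sh"
proof (cases "m \<le> s i mod d")
  case True
  then show ?thesis
    using i unfolding set_E_cols by (intro exI[of _ 0] exI[of _ "int (s i mod d)"]) (auto simp: monom_0)
next
  case False
  then have d: "0 < d" using m by (cases "d = 0") auto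
  define k where "k = (m - s i mod d - 1) div d"
  have "m - s i mod d - 1 < s i div d * d" using m False div_mult_mod_eq[of "s i" d] by linarith
  then have "k < s i div d" unfolding k_def using d by (simp add: div_less_iff_less_mult)
  then have "(i, monom 1 (s i mod d + k * d), int d) \<in> set (E_cols n s d :: (nat \<times> 'a poly \<times> int) list)"
    using i unfolding set_E_cols by blast
  moreover have "k * d \<le> m - s i mod d - 1" "m - s i mod d - 1 < k * d + d"
    unfolding k_def using div_mult_mod_eq[of "m - s i mod d - 1" d]
      mod_less_divisor[OF d, of "m - s i mod d - 1"] by linarith+
  then have "s i mod d + k * d \<le> m" "m - (s i mod d + k * d) \<le> d" using False by linarith+
  ultimately show ?thesis
    by (intro exI[of _ "s i mod d + k * d"] exI[of _ "int d"]) (simp only: of_nat_le_iff)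
qed

lemma s_star_E_cols:
  assumes "k < length (E_cols n s d :: (nat \<times> 'a::comm_ring_1 poly \<times> int) list)"
  shows "s_star n s d k = snd (snd (E_cols n s d ! k :: nat \<times> 'a poly \<times> int))"
proof -
  have "map (snd \<circ> snd) (E_cols n s d :: (nat \<times> 'a poly \<times> int) list)
          = concat (map (\<lambda>i. int (s i mod d) # replicate (s i div d) (int d)) [0..<n])"
    by (simp add: E_cols_def map_concat comp_def map_replicate_const)
  then show ?thesis unfolding s_star_def using assms by (metis comp_apply nth_map)
qed

lemma E_mat_carrier: "(E_mat n s d :: 'a::comm_ring_1 poly mat) \<in> carrier_mat n (n + (\<Sum>i<n. s i div d))"
  using E_cols_length[of n s d, where 'a = 'a] by (simp add: E_mat_def Let_def)

lemma E_mat_entry_degree: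
  assumes a: "a < n" and k: "k < n + (\<Sum>i<n. s i div d)"
    and nz: "(E_mat n s d :: 'a::comm_ring_1 poly mat) $$ (a,k) \<noteq> 0"
  shows "int (degree ((E_mat n s d :: 'a poly mat) $$ (a,k))) + s_star n s d k \<le> int (s a)"
proof -
  let ?cs = "E_cols n s d :: (nat \<times> 'a poly \<times> int) list"
  have k': "k < length ?cs" using k E_cols_length[of n s d, where 'a = 'a] by simp
  obtain i p sh where ik: "?cs ! k = (i, p, sh)" by (metis prod.collapse)
  have E: "(E_mat n s d :: 'a poly mat) $$ (a,k) = (if a = i then p else 0)"
    using a k' ik by (simp add: E_mat_def Let_def)
  have "(i, p, sh) \<in> set ?cs" using k' ik by (metis nth_mem)
  then have "int (degree p) + sh \<le> int (s i)" by (rule E_cols_degree)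
  moreover have "s_star n s d k = sh" using s_star_E_cols[OF k'] ik by simp
  ultimately show ?thesis using nz unfolding E by (simp split: if_splits)
qed

lemma s_star_le:
  assumes "k < n + (\<Sum>i<n. s i div d)" "0 < d"
  shows "s_star n s d k \<le> int d"
proof -
  let ?L = "concat (map (\<lambda>i. int (s i mod d) # replicate (s i div d) (int d)) [0..<n])"
  have "length ?L = n + (\<Sum>i<n. s i div d)" by (induct n) auto
  then have "?L ! k \<in> set ?L" using assms(1) by (intro nth_mem) simp
  then show ?thesis
    unfolding s_star_def using mod_less_divisor[OF assms(2)] by (auto simp: less_imp_le)
qed

lemma E_mat_mult_cdeg_le:
  fixes v :: "'a::comm_ring_1 poly vec"
  assumes v: "v \<in> carrier_vec (n + (\<Sum>i<n. s i div d))" and vs: "cdeg_le (\<lambda>k. - s_star n s d k) v 0"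
  shows "cdeg_le (\<lambda>a. - int (s a)) (E_mat n s d *\<^sub>v v) 0"
proof -
  have "cdeg_le (\<lambda>a. - int (s a)) (E_mat n s d *\<^sub>v v) (0 + 0)"
  proof (rule cdeg_le_mult_mat_vec[OF E_mat_carrier v vs])
    fix a k assume a: "a < n" and k: "k < n + (\<Sum>i<n. s i div d)"
      and nz: "(E_mat n s d :: 'a poly mat) $$ (a,k) \<noteq> 0"
    show "int (degree ((E_mat n s d :: 'a poly mat) $$ (a,k))) + - int (s a) \<le> - s_star n s d k + 0"
      using E_mat_entry_degree[OF a k nz] by simp
  qed
  then show ?thesis by simp
qed

definition E_reachable :: "nat \<Rightarrow> (nat \<Rightarrow> nat) \<Rightarrow> nat \<Rightarrow> 'a::comm_ring_1 poly vec \<Rightarrow> bool" where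
  "E_reachable n s d y \<longleftrightarrow> (\<exists>v \<in> carrier_vec (n + (\<Sum>i<n. s i div d)).
       cdeg_le (\<lambda>k. - s_star n s d k) v 0 \<and> y = E_mat n s d *\<^sub>v v)"

lemma E_reachable_zero: "E_reachable n s d (0\<^sub>v n :: 'a::comm_ring_1 poly vec)"
proof -
  have "(0\<^sub>v n :: 'a poly vec) = E_mat n s d *\<^sub>v 0\<^sub>v (n + (\<Sum>i<n. s i div d))"
    using mult_mat_vec_zero_right[of "E_mat n s d :: 'a poly mat"] E_mat_carrier[of n s d, where 'a = 'a]
    by simp
  then show ?thesis unfolding E_reachable_def
    by (intro bexI[of _ "0\<^sub>v (n + (\<Sum>i<n. s i div d))"] conjI) auto
qed

lemma E_reachable_add:
  assumes "E_reachable n s d y" "E_reachable n s d y'"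
  shows "E_reachable n s d (y + y')"
proof -
  obtain v v' where v: "v \<in> carrier_vec (n + (\<Sum>i<n. s i div d))" "cdeg_le (\<lambda>k. - s_star n s d k) v 0"
      "y = E_mat n s d *\<^sub>v v"
    and v': "v' \<in> carrier_vec (n + (\<Sum>i<n. s i div d))" "cdeg_le (\<lambda>k. - s_star n s d k) v' 0"
      "y' = E_mat n s d *\<^sub>v v'"
    using assms unfolding E_reachable_def by blast
  have "y + y' = E_mat n s d *\<^sub>v (v + v')"
    unfolding v(3) v'(3) by (rule mult_add_distrib_mat_vec[symmetric, OF E_mat_carrier v(1) v'(1)])
  moreover have "cdeg_le (\<lambda>k. - s_star n s d k) (v + v') 0"
    using v v' by (intro cdeg_le_add) auto
  ultimately show ?thesis unfolding E_reachable_def using v(1) v'(1) by (meson add_carrier_vec)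
qed

lemma E_reachable_sum:
  assumes "finite S" "\<And>x. x \<in> S \<Longrightarrow> E_reachable n s d (vec n (g x))"
  shows "E_reachable n s d (vec n (\<lambda>a. \<Sum>x\<in>S. g x a))"
  using assms
proof (induction S rule: finite_induct)
  case empty
  then show ?case using E_reachable_zero by (simp add: zero_vec_def)
next
  case (insert x S)
  have "vec n (\<lambda>a. \<Sum>x\<in>insert x S. g x a) = vec n (g x) + vec n (\<lambda>a. \<Sum>x\<in>S. g x a)"
    using insert(1,2) by (intro eq_vecI) auto
  moreover have "E_reachable n s d (vec n (g x))" "E_reachable n s d (vec n (\<lambda>a. \<Sum>x\<in>S. g x a))"
    using insert.prems insert.IH by simp_all
  ultimately show ?case by (simp only: E_reachable_add)
qed

lemma E_reachable_monom:
  assumes i: "i < n" and m: "m \<le> s i"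
  shows "E_reachable n s d (vec n (\<lambda>a. if a = i then monom c m else 0) :: 'a::comm_ring_1 poly vec)"
proof -
  let ?cs = "E_cols n s d :: (nat \<times> 'a poly \<times> int) list"
  obtain e sh where mem: "(i, monom 1 e, sh) \<in> set ?cs" and e: "e \<le> m" "int (m - e) \<le> sh"
    using E_cols_monom_below[of i n m s d, OF i m] by blast
  then obtain k where k: "k < length ?cs" "?cs ! k = (i, monom 1 e, sh)"
    by (metis in_set_conv_nth)
  define v where "v = vec (n + (\<Sum>i<n. s i div d)) (\<lambda>l. if l = k then monom c (m - e) else 0)"
  have v: "v \<in> carrier_vec (n + (\<Sum>i<n. s i div d))" by (simp add: v_def)
  have "cdeg_le (\<lambda>k. - s_star n s d k) v 0"
    using s_star_E_cols[OF k(1)] k(2) e degree_monom_le[of c "m - e"]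
    unfolding cdeg_le_def v_def by auto
  moreover have "vec n (\<lambda>a. if a = i then monom c m else 0) = E_mat n s d *\<^sub>v v"
  proof (rule eq_vecI)
    fix a assume "a < dim_vec (E_mat n s d *\<^sub>v v)"
    then have a: "a < n" using E_mat_carrier[of n s d, where 'a = 'a] by simp
    have "(E_mat n s d *\<^sub>v v) $ a
            = (\<Sum>l<n + (\<Sum>i<n. s i div d). (E_mat n s d :: 'a poly mat) $$ (a,l) * v $ l)"
      using index_mult_mat_vec_sum[of a "E_mat n s d" v] a v E_mat_carrier[of n s d, where 'a = 'a]
      by simp
    also have "\<dots> = (E_mat n s d :: 'a poly mat) $$ (a,k) * monom c (m - e)"
      using k(1) E_cols_length[of n s d, where 'a = 'a] by (simp add: v_def if_distrib cong: if_cong)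
    also have "\<dots> = (if a = i then monom c m else 0)"
      using a k e(1) by (simp add: E_mat_def Let_def mult_monom)
    finally show "vec n (\<lambda>a. if a = i then monom c m else 0) $ a = (E_mat n s d *\<^sub>v v) $ a"
      using a by simp
  qed (use E_mat_carrier[of n s d, where 'a = 'a] in simp)
  ultimately show ?thesis unfolding E_reachable_def using v by blast
qed

lemma E_reachable_if_cdeg_le:
  fixes y :: "'a::comm_ring_1 poly vec"
  assumes y: "y \<in> carrier_vec n" and deg: "cdeg_le (\<lambda>a. - int (s a)) y 0"
  shows "E_reachable n s d y"
proof -
  let ?S = "Sigma {..<n} (\<lambda>i. {..s i})"
  let ?g = "\<lambda>(i,m) a. if a = i then monom (coeff (y $ i) m) m else 0"
  have "y $ a = (\<Sum>x\<in>?S. ?g x a)" if a: "a < n" for a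
  proof -
    have "degree (y $ a) \<le> s a" using deg a y unfolding cdeg_le_def by (cases "y $ a = 0") auto
    then have "y $ a = (\<Sum>m\<le>s a. monom (coeff (y $ a) m) m)"
      by (simp add: poly_as_sum_of_monoms')
    also have "\<dots> = (\<Sum>i<n. if a = i then (\<Sum>m\<le>s i. monom (coeff (y $ i) m) m) else 0)"
      using a by simp
    also have "\<dots> = (\<Sum>i<n. \<Sum>m\<le>s i. if a = i then monom (coeff (y $ i) m) m else 0)"
      by (intro sum.cong) auto
    also have "\<dots> = (\<Sum>x\<in>?S. ?g x a)"
      by (subst sum.Sigma) (auto simp: case_prod_unfold)
    finally show ?thesis .
  qed
  then have "y = vec n (\<lambda>a. \<Sum>x\<in>?S. ?g x a)" using y by (intro eq_vecI) auto
  moreover have "E_reachable n s d (vec n (\<lambda>a. \<Sum>x\<in>?S. ?g x a))"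
    by (rule E_reachable_sum) (auto intro: E_reachable_monom)
  ultimately show ?thesis by simp
qed

section \<open>Kernel vectors of \<open>[F, -R]\<close>\<close>

locale hermite_kernel_setting =
  fixes F H Q R N :: "'a::field poly mat" and n d :: nat and s :: "nat \<Rightarrow> nat"
  assumes F_carrier: "F \<in> carrier_mat n n"
    and F_nonsing: "nonsingular F"
    and F_red: "col_reduced F"
    and H_hnf: "is_hermite_nf F H"
    and H_carrier: "H \<in> carrier_mat n n"
    and s_eq: "s = (\<lambda>i. degree (H $$ (i,i)))"
    and Q_carrier: "Q \<in> carrier_mat n (n + (\<Sum>i<n. s i div d))"
    and R_carrier: "R \<in> carrier_mat n (n + (\<Sum>i<n. s i div d))"
    and E_eq: "E_mat n s d = F * Q + R"
    and R_deg: "\<And>i j. i < n \<Longrightarrow> j < n + (\<Sum>i<n. s i div d) \<Longrightarrow> R $$ (i,j) \<noteq> 0 \<Longrightarrow>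
                  degree (R $$ (i,j)) < d"
    and N_min: "minimal_kernel_basis (\<lambda>i. if i < n then - 2 * int d else - s_star n s d (i - n))
                  (hcat F (- R)) N"
begin

abbreviation nbar :: nat where
  "nbar \<equiv> n + (\<Sum>i<n. s i div d)"

abbreviation E :: "'a poly mat" where
  "E \<equiv> E_mat n s d"

abbreviation kernel_shift :: "nat \<Rightarrow> int" where
  "kernel_shift \<equiv> \<lambda>i. if i < n then - 2 * int d else - s_star n s d (i - n)"

definition Nbar :: "'a poly mat" where
  "Nbar = select_cols (\<lambda>v. cdeg_le (\<lambda>i. - s_star n s d i) v 0) (bottom_rows n N)"

lemma hcat_F_R_carrier: "hcat F (- R) \<in> carrier_mat n (n + nbar)"
  using F_carrier R_carrier by (intro hcat_carrier) (simp_all add: uminus_carrier_iff_mat)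

lemma N_carrier: "N \<in> carrier_mat (n + nbar) (dim_col N)"
proof -
  have "dim_row N = dim_col (hcat F (- R))"
    using N_min unfolding minimal_kernel_basis_def right_kernel_basis_def by blast
  then show ?thesis using hcat_F_R_carrier by (metis carrier_matD(2) carrier_matI)
qed

lemma N_dim_row: "dim_row N = n + nbar"
  using N_carrier by (rule carrier_matD)

lemma Nbar_carrier: "Nbar \<in> carrier_mat nbar (dim_col Nbar)"
  unfolding Nbar_def using N_carrier by (intro carrier_matI) simp_all

lemma kernel_iff:
  assumes u: "u \<in> carrier_vec n" and v: "v \<in> carrier_vec nbar"
  shows "hcat F (- R) *\<^sub>v (u @\<^sub>v v) = 0\<^sub>v n \<longleftrightarrow> F *\<^sub>v u = R *\<^sub>v v"
proof -
  have "hcat F (- R) *\<^sub>v (u @\<^sub>v v) = F *\<^sub>v u + (- R) *\<^sub>v v"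
    using F_carrier R_carrier u v by (intro hcat_mult_append_vec) (simp_all add: uminus_carrier_iff_mat)
  also have "(- R) *\<^sub>v v = - (R *\<^sub>v v)" using R_carrier v by simp
  finally show ?thesis
    using F_carrier R_carrier v by (auto simp: vec_eq_iff)
qed
lemma kernel_basis_mult_zero: "hcat F (- R) * N = 0\<^sub>m n (dim_col N)"
  using N_min hcat_F_R_carrier
  unfolding minimal_kernel_basis_def right_kernel_basis_def by (metis carrier_matD(1))

lemma E_mult_vec:
  assumes v: "v \<in> carrier_vec nbar"
  shows "E *\<^sub>v v = F *\<^sub>v (Q *\<^sub>v v) + R *\<^sub>v v"
  unfolding E_eq
  using add_mult_distrib_mat_vec[OF mult_carrier_mat[OF F_carrier Q_carrier] R_carrier v]
    assoc_mult_mat_vec[OF F_carrier Q_carrier v] by simp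

lemma E_Nbar_in_H_lattice:
  assumes c: "c \<in> carrier_vec (dim_col Nbar)"
  shows "\<exists>c' \<in> carrier_vec n. (E * Nbar) *\<^sub>v c = H *\<^sub>v c'"
proof -
  obtain S where S: "S \<in> carrier_mat (dim_col (bottom_rows n N)) (dim_col Nbar)" "Nbar = bottom_rows n N * S"
    by (rule select_cols_factor[of "bottom_rows n N" "\<lambda>v. cdeg_le (\<lambda>i. - s_star n s d i) v 0",
          folded Nbar_def])
  obtain V where V: "V \<in> carrier_mat n n" "F = H * V"
    using hermite_nf_right_factor[OF H_hnf F_carrier] .
  have Sc: "S *\<^sub>v c \<in> carrier_vec (dim_col N)" using mult_mat_vec_carrier[OF S(1) c] by simp
  define w where "w = N *\<^sub>v (S *\<^sub>v c)"
  define u where "u = vec_first w n"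
  define v where "v = vec_last w nbar"
  have w: "w \<in> carrier_vec (n + nbar)" unfolding w_def using N_carrier Sc by (rule mult_mat_vec_carrier)
  have u: "u \<in> carrier_vec n" and v: "v \<in> carrier_vec nbar" by (simp_all add: u_def v_def)
  have "hcat F (- R) *\<^sub>v w = (hcat F (- R) * N) *\<^sub>v (S *\<^sub>v c)"
    unfolding w_def by (rule assoc_mult_mat_vec[symmetric, OF hcat_F_R_carrier N_carrier Sc])
  also have "\<dots> = 0\<^sub>v n"
    unfolding kernel_basis_mult_zero using Sc by (intro eq_vecI) simp_all
  finally have Fu: "F *\<^sub>v u = R *\<^sub>v v"
    using kernel_iff[OF u v] vec_first_last_append[OF w] unfolding u_def v_def by simp
  have "Nbar *\<^sub>v c = bottom_rows n N *\<^sub>v (S *\<^sub>v c)"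
    unfolding S(2) by (rule assoc_mult_mat_vec[OF carrier_matI[OF refl refl] S(1) c])
  also have "\<dots> = v"
    unfolding bottom_rows_mult_vec v_def w_def by (simp add: N_dim_row)
  finally have Nbar_c: "Nbar *\<^sub>v c = v" .
  have Qvu: "Q *\<^sub>v v + u \<in> carrier_vec n"
    using Q_carrier v u by (metis add_carrier_vec mult_mat_vec_carrier)
  have "(E * Nbar) *\<^sub>v c = E *\<^sub>v v"
    unfolding Nbar_c[symmetric] by (rule assoc_mult_mat_vec[OF E_mat_carrier Nbar_carrier c])
  also have "\<dots> = F *\<^sub>v (Q *\<^sub>v v) + R *\<^sub>v v" using v by (rule E_mult_vec)
  also have "\<dots> = F *\<^sub>v (Q *\<^sub>v v + u)"
    unfolding Fu[symmetric] using F_carrier Q_carrier v u by (simp add: mult_add_distrib_mat_vec)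
  also have "\<dots> = H *\<^sub>v (V *\<^sub>v (Q *\<^sub>v v + u))"
    unfolding V(2) using H_carrier V(1) Qvu by (rule assoc_mult_mat_vec)
  finally show ?thesis using V(1) Qvu by (intro bexI[of _ "V *\<^sub>v (Q *\<^sub>v v + u)"]) simp_all
qed

lemma R_mult_degree:
  assumes v: "v \<in> carrier_vec nbar" and vs: "cdeg_le (\<lambda>k. - s_star n s d k) v 0"
  shows "cdeg_le (\<lambda>_. 0) (R *\<^sub>v v) (2 * int d - 1)"
proof -
  have "cdeg_le (\<lambda>_. 0) (R *\<^sub>v v) (0 + (2 * int d - 1))"
  proof (rule cdeg_le_mult_mat_vec[OF R_carrier v vs])
    fix i j assume i: "i < n" and j: "j < nbar" and nz: "R $$ (i,j) \<noteq> 0"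
    then have "degree (R $$ (i,j)) < d" by (rule R_deg)
    moreover have "s_star n s d j \<le> int d" using j \<open>degree (R $$ (i,j)) < d\<close> by (intro s_star_le) auto
    ultimately show "int (degree (R $$ (i,j))) + 0 \<le> - s_star n s d j + (2 * int d - 1)" by linarith
  qed
  then show ?thesis by simp
qed

lemma kernel_vector_in_Nbar:
  assumes u: "u \<in> carrier_vec n" and v: "v \<in> carrier_vec nbar"
    and vs: "cdeg_le (\<lambda>k. - s_star n s d k) v 0" and Fu: "F *\<^sub>v u = R *\<^sub>v v"
  shows "\<exists>a \<in> carrier_vec (dim_col Nbar). v = Nbar *\<^sub>v a"
proof -
  have Fu_deg: "cdeg_le (\<lambda>_. 0) (F *\<^sub>v u) (2 * int d - 1)" using Fu R_mult_degree[OF v vs] by simp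
  have u_deg: "int (degree (u $ i)) < 2 * int d" if "i < n" "u $ i \<noteq> 0" for i
    using col_reduced_mult_vec_degree[OF F_red _ Fu_deg _ that(2)] u F_carrier that(1) by simp
  have w: "u @\<^sub>v v \<in> carrier_vec (n + nbar)" using u v by simp
  have "cdeg_le kernel_shift (u @\<^sub>v v) 0"
    using u v vs u_deg unfolding cdeg_le_def by (auto simp: index_append_vec less_imp_le)
  obtain c where c: "c \<in> carrier_vec (dim_col N)" and w_eq: "u @\<^sub>v v = N *\<^sub>v c"
    using N_min kernel_iff[OF u v] Fu w hcat_F_R_carrier
    unfolding minimal_kernel_basis_def right_kernel_basis_def by (metis carrier_matD)
  have "cdeg_le (\<lambda>i. - s_star n s d i) (col (bottom_rows n N) l) 0"
    if l: "l < dim_col N" and cl: "c $ l \<noteq> 0" for l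
  proof -
    have "cdeg kernel_shift (col N l) \<le> 0"
      using predictable_degree[OF _ c _ l cl] N_min \<open>cdeg_le kernel_shift (u @\<^sub>v v) 0\<close> w_eq
      unfolding minimal_kernel_basis_def by fastforce
    then have "cdeg_le kernel_shift (col N l) 0" using cdeg_le_cdeg cdeg_le_mono by blast
    then show ?thesis
      using cdeg_le_vec_last[of kernel_shift "col N l" 0 nbar] col_bottom_rows[OF l, of n] N_dim_row
      by simp
  qed
  then have "bottom_rows n N *\<^sub>v c = Nbar *\<^sub>v vec (dim_col Nbar) (\<lambda>k. c $ (selected_cols
               (\<lambda>v. cdeg_le (\<lambda>i. - s_star n s d i) v 0) (bottom_rows n N) ! k))"
    unfolding Nbar_def using c by (intro select_cols_mult_vec) simp_all
  moreover have "bottom_rows n N *\<^sub>v c = v"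
    unfolding bottom_rows_mult_vec w_eq[symmetric] N_dim_row using u v
    by (intro eq_vecI) (auto simp: vec_last_def)
  ultimately show ?thesis by (metis vec_carrier)
qed


lemma F_lattice_in_E_Nbar:
  assumes u0: "u0 \<in> carrier_vec n" and deg: "cdeg_le (\<lambda>a. - int (s a)) (F *\<^sub>v u0) 0"
  shows "\<exists>a \<in> carrier_vec (dim_col Nbar). F *\<^sub>v u0 = (E * Nbar) *\<^sub>v a"
proof -
  obtain v where v: "v \<in> carrier_vec nbar" "cdeg_le (\<lambda>k. - s_star n s d k) v 0" "F *\<^sub>v u0 = E *\<^sub>v v"
    using E_reachable_if_cdeg_le[OF mult_mat_vec_carrier[OF F_carrier u0] deg]
    unfolding E_reachable_def by blast
  define u where "u = u0 - Q *\<^sub>v v"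
  have Qv: "Q *\<^sub>v v \<in> carrier_vec n" using Q_carrier v(1) by (rule mult_mat_vec_carrier)
  have u: "u \<in> carrier_vec n" unfolding u_def using u0 Qv by (rule minus_carrier_vec)
  have "F *\<^sub>v u = F *\<^sub>v u0 - F *\<^sub>v (Q *\<^sub>v v)"
    unfolding u_def using F_carrier u0 Qv by (rule mult_minus_distrib_mat_vec)
  also have "F *\<^sub>v u0 = F *\<^sub>v (Q *\<^sub>v v) + R *\<^sub>v v"
    unfolding v(3) by (rule E_mult_vec[OF v(1)])
  finally have "F *\<^sub>v u = R *\<^sub>v v"
    using F_carrier R_carrier Qv v(1) by (intro eq_vecI) auto
  then obtain a where a: "a \<in> carrier_vec (dim_col Nbar)" "v = Nbar *\<^sub>v a"
    using kernel_vector_in_Nbar[OF u v(1,2)] by blast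
  have "F *\<^sub>v u0 = (E * Nbar) *\<^sub>v a"
    unfolding v(3) a(2) by (rule assoc_mult_mat_vec[symmetric, OF E_mat_carrier Nbar_carrier a(1)])
  then show ?thesis using a(1) by blast
qed

lemma column_basis_E_Nbar: "column_basis (E * Nbar) H"
proof (rule column_basisI[OF H_carrier hermite_nf_det_nonzero[OF F_nonsing F_carrier H_hnf]])
  show "E * Nbar \<in> carrier_mat n (dim_col Nbar)"
    using E_mat_carrier Nbar_carrier by (rule mult_carrier_mat)
  show "\<exists>c' \<in> carrier_vec n. (E * Nbar) *\<^sub>v c = H *\<^sub>v c'" if "c \<in> carrier_vec (dim_col Nbar)" for c
    using that by (rule E_Nbar_in_H_lattice)
  show "\<exists>a \<in> carrier_vec (dim_col Nbar). col H j = (E * Nbar) *\<^sub>v a" if j: "j < n" for j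
  proof -
    obtain U where U: "U \<in> carrier_mat n n" "H = F * U"
      using hermite_nf_left_factor[OF H_hnf F_carrier] by blast
    have "col H j = F *\<^sub>v col U j" unfolding U(2) using F_carrier U(1) j by (rule col_mult2)
    moreover have "cdeg_le (\<lambda>a. - int (s a)) (col H j) 0"
      unfolding s_eq using hermite_nf_col_cdeg_le[OF H_hnf H_carrier j] .
    moreover have "col U j \<in> carrier_vec n" using U(1) j by simp
    ultimately show ?thesis using F_lattice_in_E_Nbar by simp
  qed
qed

lemma cdeg_col_E_Nbar:
  assumes j: "j < dim_col (E * Nbar)" and nz: "col (E * Nbar) j \<noteq> 0\<^sub>v n"
  shows "cdeg (\<lambda>i. - int (s i)) (col (E * Nbar) j) = 0"
proof -
  have EN: "E * Nbar \<in> carrier_mat n (dim_col Nbar)"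
    using E_mat_carrier Nbar_carrier by (rule mult_carrier_mat)
  have j': "j < dim_col Nbar" using j EN by simp
  have col_eq: "col (E * Nbar) j = E *\<^sub>v col Nbar j"
    using E_mat_carrier Nbar_carrier j' by (rule col_mult2)
  have "cdeg_le (\<lambda>i. - s_star n s d i) (col Nbar j) 0"
    using j' unfolding Nbar_def col_select_cols[OF j'[unfolded Nbar_def]]
    by (rule selected_cols_nth(2))
  then have deg: "cdeg_le (\<lambda>i. - int (s i)) (col (E * Nbar) j) 0"
    unfolding col_eq by (rule E_mat_mult_cdeg_le[OF col_carrier_vec[OF j' Nbar_carrier]])
  obtain c' where c': "c' \<in> carrier_vec n" "(E * Nbar) *\<^sub>v unit_vec (dim_col Nbar) j = H *\<^sub>v c'"
    using E_Nbar_in_H_lattice[OF unit_vec_carrier] by blast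
  have "col (E * Nbar) j = H *\<^sub>v c'" using c'(2) mult_mat_vec_unit_vec[OF EN j'] by simp
  then show ?thesis
    using hermite_nf_cdeg_eq_0[OF H_hnf H_carrier c'(1)] nz deg unfolding s_eq by simp
qed

end

theorem mainTheorem4:
  fixes F H Q R N :: "'a::field poly mat" and n :: nat
  defines "d \<equiv> dmax F"
      and "s \<equiv> \<lambda>i. degree (H $$ (i,i))"
  defines "E \<equiv> E_mat n s d :: 'a poly mat"
      and "nbar \<equiv> n + (\<Sum>i<n. s i div d)"
  assumes F_carrier: "F \<in> carrier_mat n n"
      and F_nonsing: "nonsingular F"
      and F_red: "col_reduced F"
      and H_hnf: "is_hermite_nf F H"
      and H_carrier: "H \<in> carrier_mat n n"
      and QR_carrier: "Q \<in> carrier_mat n nbar" "R \<in> carrier_mat n nbar"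
      and E_eq: "E = F * Q + R"
      and R_deg: "\<forall>i < n. \<forall>j < nbar. R $$ (i,j) \<noteq> 0 \<longrightarrow> degree (R $$ (i,j)) < d"
      and N_min: "minimal_kernel_basis
                    (\<lambda>i. if i < n then - 2 * int d else - s_star n s d (i - n))
                    (hcat F (- R)) N"
  shows "column_basis (E * select_cols (\<lambda>v. cdeg_le (\<lambda>i. - s_star n s d i) v 0) (bottom_rows n N)) H
       \<and> (\<forall>j < dim_col (E * select_cols (\<lambda>v. cdeg_le (\<lambda>i. - s_star n s d i) v 0) (bottom_rows n N)).
            col (E * select_cols (\<lambda>v. cdeg_le (\<lambda>i. - s_star n s d i) v 0) (bottom_rows n N)) j \<noteq> 0\<^sub>v n
            \<longrightarrow> cdeg (\<lambda>i. - int (s i)) (col (E * select_cols (\<lambda>v. cdeg_le (\<lambda>i. - s_star n s d i) v 0) (bottom_rows n N)) j) = 0)"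
proof -
  interpret hermite_kernel_setting F H Q R N n d s
  proof
    show "s = (\<lambda>i. degree (H $$ (i,i)))" by (simp add: s_def)
    show "E_mat n s d = F * Q + R" using E_eq unfolding E_def .
    show "degree (R $$ (i,j)) < d" if "i < n" "j < n + (\<Sum>i<n. s i div d)" "R $$ (i,j) \<noteq> 0" for i j
      using R_deg that unfolding nbar_def by blast
  qed (use F_carrier F_nonsing F_red H_hnf H_carrier QR_carrier N_min in \<open>simp_all add: nbar_def\<close>)
  show ?thesis
    using column_basis_E_Nbar cdeg_col_E_Nbar unfolding E_def Nbar_def by blast
qed

end
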